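(* Let $\mathcal{C}$ be a model of linear logic with comonad $(!,\mathrm{der},\mathrm{dig})$. Let $(S,\pi_0,\pi_1,\sigma)$ be a summability structure on $\mathcal{C}$. Let $\partial_X:!SX\to S!X$ be a natural transformation satisfying $\pi_0\circ\partial_X=!\pi_0$, and set $\mathrm{d}_X:=\pi_1\circ\partial_X:!SX\to !X$. Then the equation $S(\mathrm{der}_X)\circ\partial_X=\mathrm{der}_{SX}$ holds (for all $X$) if and only if $\mathrm{der}_X\circ \mathrm{d}_X=\mathrm{der}_X\circ !\pi_1$ holds (for all $X$).
   Context: A comonad $(!,\mathrm{der},\mathrm{dig})$ consists of an endofunctor $!$ with natural transformations $\mathrm{der}_X:!X\to X$ and $\mathrm{dig}_X:!X\to !!X$ satisfying the comonad laws. A pre-summability structure $(S,\pi_0,\pi_1,\sigma)$ on $\mathcal{C}$ consists of the following data. There are distinguished zero morphisms $0_{X,Y}$. There is an endofunctor $S$ with $S(0)=0$. There are natural transformations $\pi_0,\pi_1,\sigma:S\Rightarrow\mathrm{Id}$, where $\pi_0,\pi_1$ are jointly monic: $\pi_0\circ f=\pi_0\circ g$ and $\pi_1\circ f=\pi_1\circ g$ imply $f=g$. Morphisms $f_0,f_1:X\to Y$ are summable if there is a (unique) $\langle f_0,f_1\rangle:X\to SY$ with $\pi_i\circ\langle f_0,f_1\rangle=f_i$. Their sum is $\sigma\circ\langle f_0,f_1\rangle$. A summability structure is a pre-summability structure whose partial sum is commutative, has $0$ as neutral element, and is associative, in the partial-commutative-monoid sense. *)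

theory Defs
  imports Main
begin

text \<open>A category is given by a set of objects Obj, hom-sets Hom X Y,
  a composition  cmp g f  (meaning g after f) and identities idm X.\<close>

definition category ::
  "'o set \<Rightarrow> ('o \<Rightarrow> 'o \<Rightarrow> 'm set) \<Rightarrow> ('m \<Rightarrow> 'm \<Rightarrow> 'm) \<Rightarrow> ('o \<Rightarrow> 'm) \<Rightarrow> bool" where
  "category Obj Hom cmp idm \<longleftrightarrow>
     (\<forall>X\<in>Obj. idm X \<in> Hom X X) \<and>
     (\<forall>X\<in>Obj. \<forall>Y\<in>Obj. \<forall>Z\<in>Obj. \<forall>f\<in>Hom X Y. \<forall>g\<in>Hom Y Z. cmp g f \<in> Hom X Z) \<and>
     (\<forall>X\<in>Obj. \<forall>Y\<in>Obj. \<forall>f\<in>Hom X Y. cmp (idm Y) f = f \<and> cmp f (idm X) = f) \<and>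
     (\<forall>W\<in>Obj. \<forall>X\<in>Obj. \<forall>Y\<in>Obj. \<forall>Z\<in>Obj. \<forall>f\<in>Hom W X. \<forall>g\<in>Hom X Y. \<forall>h\<in>Hom Y Z.
        cmp h (cmp g f) = cmp (cmp h g) f)"

definition endofunctor ::
  "'o set \<Rightarrow> ('o \<Rightarrow> 'o \<Rightarrow> 'm set) \<Rightarrow> ('m \<Rightarrow> 'm \<Rightarrow> 'm) \<Rightarrow> ('o \<Rightarrow> 'm)
   \<Rightarrow> ('o \<Rightarrow> 'o) \<Rightarrow> ('m \<Rightarrow> 'm) \<Rightarrow> bool" where
  "endofunctor Obj Hom cmp idm Fo Fm \<longleftrightarrow>
     (\<forall>X\<in>Obj. Fo X \<in> Obj) \<and>
     (\<forall>X\<in>Obj. \<forall>Y\<in>Obj. \<forall>f\<in>Hom X Y. Fm f \<in> Hom (Fo X) (Fo Y)) \<and>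
     (\<forall>X\<in>Obj. Fm (idm X) = idm (Fo X)) \<and>
     (\<forall>X\<in>Obj. \<forall>Y\<in>Obj. \<forall>Z\<in>Obj. \<forall>f\<in>Hom X Y. \<forall>g\<in>Hom Y Z.
        Fm (cmp g f) = cmp (Fm g) (Fm f))"

definition nat_trans ::
  "'o set \<Rightarrow> ('o \<Rightarrow> 'o \<Rightarrow> 'm set) \<Rightarrow> ('m \<Rightarrow> 'm \<Rightarrow> 'm)
   \<Rightarrow> ('o \<Rightarrow> 'o) \<Rightarrow> ('m \<Rightarrow> 'm) \<Rightarrow> ('o \<Rightarrow> 'o) \<Rightarrow> ('m \<Rightarrow> 'm) \<Rightarrow> ('o \<Rightarrow> 'm) \<Rightarrow> bool" where
  "nat_trans Obj Hom cmp Fo Fm Go Gm eta \<longleftrightarrow>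
     (\<forall>X\<in>Obj. eta X \<in> Hom (Fo X) (Go X)) \<and>
     (\<forall>X\<in>Obj. \<forall>Y\<in>Obj. \<forall>f\<in>Hom X Y. cmp (Gm f) (eta X) = cmp (eta Y) (Fm f))"

text \<open>A comonad (B, der, dig): B = (Bo,Bm) is the endofunctor written !.\<close>

definition comonad ::
  "'o set \<Rightarrow> ('o \<Rightarrow> 'o \<Rightarrow> 'm set) \<Rightarrow> ('m \<Rightarrow> 'm \<Rightarrow> 'm) \<Rightarrow> ('o \<Rightarrow> 'm)
   \<Rightarrow> ('o \<Rightarrow> 'o) \<Rightarrow> ('m \<Rightarrow> 'm) \<Rightarrow> ('o \<Rightarrow> 'm) \<Rightarrow> ('o \<Rightarrow> 'm) \<Rightarrow> bool" where
  "comonad Obj Hom cmp idm Bo Bm der dig \<longleftrightarrow>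
     category Obj Hom cmp idm \<and>
     endofunctor Obj Hom cmp idm Bo Bm \<and>
     nat_trans Obj Hom cmp Bo Bm id id der \<and>
     nat_trans Obj Hom cmp Bo Bm (Bo \<circ> Bo) (Bm \<circ> Bm) dig \<and>
     (\<forall>X\<in>Obj. cmp (der (Bo X)) (dig X) = idm (Bo X)) \<and>
     (\<forall>X\<in>Obj. cmp (Bm (der X)) (dig X) = idm (Bo X)) \<and>
     (\<forall>X\<in>Obj. cmp (dig (Bo X)) (dig X) = cmp (Bm (dig X)) (dig X))"

definition zero_morphisms ::
  "'o set \<Rightarrow> ('o \<Rightarrow> 'o \<Rightarrow> 'm set) \<Rightarrow> ('m \<Rightarrow> 'm \<Rightarrow> 'm) \<Rightarrow> ('o \<Rightarrow> 'o \<Rightarrow> 'm) \<Rightarrow> bool" where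
  "zero_morphisms Obj Hom cmp zero \<longleftrightarrow>
     (\<forall>X\<in>Obj. \<forall>Y\<in>Obj. zero X Y \<in> Hom X Y) \<and>
     (\<forall>X\<in>Obj. \<forall>Y\<in>Obj. \<forall>Z\<in>Obj. \<forall>f\<in>Hom X Y. cmp (zero Y Z) f = zero X Z) \<and>
     (\<forall>X\<in>Obj. \<forall>Y\<in>Obj. \<forall>Z\<in>Obj. \<forall>g\<in>Hom Y Z. cmp g (zero X Y) = zero X Z)"

definition pre_summability ::
  "'o set \<Rightarrow> ('o \<Rightarrow> 'o \<Rightarrow> 'm set) \<Rightarrow> ('m \<Rightarrow> 'm \<Rightarrow> 'm) \<Rightarrow> ('o \<Rightarrow> 'm) \<Rightarrow> ('o \<Rightarrow> 'o \<Rightarrow> 'm)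
   \<Rightarrow> ('o \<Rightarrow> 'o) \<Rightarrow> ('m \<Rightarrow> 'm) \<Rightarrow> ('o \<Rightarrow> 'm) \<Rightarrow> ('o \<Rightarrow> 'm) \<Rightarrow> ('o \<Rightarrow> 'm) \<Rightarrow> bool" where
  "pre_summability Obj Hom cmp idm zero So Sm p0 p1 sig \<longleftrightarrow>
     category Obj Hom cmp idm \<and>
     zero_morphisms Obj Hom cmp zero \<and>
     endofunctor Obj Hom cmp idm So Sm \<and>
     (\<forall>X\<in>Obj. \<forall>Y\<in>Obj. Sm (zero X Y) = zero (So X) (So Y)) \<and>
     nat_trans Obj Hom cmp So Sm id id p0 \<and>
     nat_trans Obj Hom cmp So Sm id id p1 \<and>
     nat_trans Obj Hom cmp So Sm id id sig \<and>
     (\<forall>Z\<in>Obj. \<forall>X\<in>Obj. \<forall>f\<in>Hom Z (So X). \<forall>g\<in>Hom Z (So X).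
        cmp (p0 X) f = cmp (p0 X) g \<longrightarrow> cmp (p1 X) f = cmp (p1 X) g \<longrightarrow> f = g)"

definition summable ::
  "('o \<Rightarrow> 'o \<Rightarrow> 'm set) \<Rightarrow> ('m \<Rightarrow> 'm \<Rightarrow> 'm) \<Rightarrow> ('o \<Rightarrow> 'o) \<Rightarrow> ('o \<Rightarrow> 'm) \<Rightarrow> ('o \<Rightarrow> 'm)
   \<Rightarrow> 'o \<Rightarrow> 'o \<Rightarrow> 'm \<Rightarrow> 'm \<Rightarrow> bool" where
  "summable Hom cmp So p0 p1 X Y f0 f1 \<longleftrightarrow>
     f0 \<in> Hom X Y \<and> f1 \<in> Hom X Y \<and>
     (\<exists>h\<in>Hom X (So Y). cmp (p0 Y) h = f0 \<and> cmp (p1 Y) h = f1)"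

definition spair ::
  "('o \<Rightarrow> 'o \<Rightarrow> 'm set) \<Rightarrow> ('m \<Rightarrow> 'm \<Rightarrow> 'm) \<Rightarrow> ('o \<Rightarrow> 'o) \<Rightarrow> ('o \<Rightarrow> 'm) \<Rightarrow> ('o \<Rightarrow> 'm)
   \<Rightarrow> 'o \<Rightarrow> 'o \<Rightarrow> 'm \<Rightarrow> 'm \<Rightarrow> 'm" where
  "spair Hom cmp So p0 p1 X Y f0 f1 =
     (THE h. h \<in> Hom X (So Y) \<and> cmp (p0 Y) h = f0 \<and> cmp (p1 Y) h = f1)"

definition ssum ::
  "('o \<Rightarrow> 'o \<Rightarrow> 'm set) \<Rightarrow> ('m \<Rightarrow> 'm \<Rightarrow> 'm) \<Rightarrow> ('o \<Rightarrow> 'o) \<Rightarrow> ('o \<Rightarrow> 'm) \<Rightarrow> ('o \<Rightarrow> 'm)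
   \<Rightarrow> ('o \<Rightarrow> 'm) \<Rightarrow> 'o \<Rightarrow> 'o \<Rightarrow> 'm \<Rightarrow> 'm \<Rightarrow> 'm" where
  "ssum Hom cmp So p0 p1 sig X Y f0 f1 = cmp (sig Y) (spair Hom cmp So p0 p1 X Y f0 f1)"

definition summability ::
  "'o set \<Rightarrow> ('o \<Rightarrow> 'o \<Rightarrow> 'm set) \<Rightarrow> ('m \<Rightarrow> 'm \<Rightarrow> 'm) \<Rightarrow> ('o \<Rightarrow> 'm) \<Rightarrow> ('o \<Rightarrow> 'o \<Rightarrow> 'm)
   \<Rightarrow> ('o \<Rightarrow> 'o) \<Rightarrow> ('m \<Rightarrow> 'm) \<Rightarrow> ('o \<Rightarrow> 'm) \<Rightarrow> ('o \<Rightarrow> 'm) \<Rightarrow> ('o \<Rightarrow> 'm) \<Rightarrow> bool" where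
  "summability Obj Hom cmp idm zero So Sm p0 p1 sig \<longleftrightarrow>
     pre_summability Obj Hom cmp idm zero So Sm p0 p1 sig \<and>
     (\<forall>X\<in>Obj. \<forall>Y\<in>Obj. \<forall>f0 f1. summable Hom cmp So p0 p1 X Y f0 f1 \<longrightarrow>
        summable Hom cmp So p0 p1 X Y f1 f0 \<and>
        ssum Hom cmp So p0 p1 sig X Y f0 f1 = ssum Hom cmp So p0 p1 sig X Y f1 f0) \<and>
     (\<forall>X\<in>Obj. \<forall>Y\<in>Obj. \<forall>f\<in>Hom X Y.
        summable Hom cmp So p0 p1 X Y f (zero X Y) \<and>
        ssum Hom cmp So p0 p1 sig X Y f (zero X Y) = f) \<and>
     (\<forall>X\<in>Obj. \<forall>Y\<in>Obj. \<forall>f0 f1 f2.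
        summable Hom cmp So p0 p1 X Y f0 f1 \<and>
        summable Hom cmp So p0 p1 X Y (ssum Hom cmp So p0 p1 sig X Y f0 f1) f2 \<longrightarrow>
          summable Hom cmp So p0 p1 X Y f1 f2 \<and>
          summable Hom cmp So p0 p1 X Y f0 (ssum Hom cmp So p0 p1 sig X Y f1 f2) \<and>
          ssum Hom cmp So p0 p1 sig X Y (ssum Hom cmp So p0 p1 sig X Y f0 f1) f2 =
          ssum Hom cmp So p0 p1 sig X Y f0 (ssum Hom cmp So p0 p1 sig X Y f1 f2))"

end

theory Submission
  imports Defs
begin

text \<open>Since \<open>\<pi>\<^sub>0, \<pi>\<^sub>1\<close> are jointly monic, \<open>S(der\<^sub>X) \<circ> \<partial>\<^sub>X = der\<^sub>S\<^sub>X\<close> holds iff it holds after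
  post-composing with \<open>\<pi>\<^sub>0\<close> and with \<open>\<pi>\<^sub>1\<close>. By naturality of \<open>\<pi>\<^sub>i\<close> and of \<open>der\<close> these
  projected equations read \<open>der\<^sub>X \<circ> \<pi>\<^sub>i \<circ> \<partial>\<^sub>X = der\<^sub>X \<circ> !\<pi>\<^sub>i\<close>; for \<open>i = 0\<close> it follows from
  \<open>\<pi>\<^sub>0 \<circ> \<partial>\<^sub>X = !\<pi>\<^sub>0\<close>, and for \<open>i = 1\<close> it is the equation \<open>der\<^sub>X \<circ> d\<^sub>X = der\<^sub>X \<circ> !\<pi>\<^sub>1\<close>.\<close>

lemma category_comp_closed:
  assumes "category Obj Hom cmp idm" "X \<in> Obj" "Y \<in> Obj" "Z \<in> Obj" "f \<in> Hom X Y" "g \<in> Hom Y Z"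
  shows "cmp g f \<in> Hom X Z"
  using assms unfolding category_def by blast

lemma category_assoc:
  assumes "category Obj Hom cmp idm" "W \<in> Obj" "X \<in> Obj" "Y \<in> Obj" "Z \<in> Obj"
    and "f \<in> Hom W X" "g \<in> Hom X Y" "h \<in> Hom Y Z"
  shows "cmp h (cmp g f) = cmp (cmp h g) f"
  using assms unfolding category_def by blast

lemma endofunctor_obj:
  assumes "endofunctor Obj Hom cmp idm Fo Fm" "X \<in> Obj"
  shows "Fo X \<in> Obj"
  using assms unfolding endofunctor_def by blast

lemma endofunctor_hom:
  assumes "endofunctor Obj Hom cmp idm Fo Fm" "X \<in> Obj" "Y \<in> Obj" "f \<in> Hom X Y"
  shows "Fm f \<in> Hom (Fo X) (Fo Y)"
  using assms unfolding endofunctor_def by blast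

lemma nat_trans_hom:
  assumes "nat_trans Obj Hom cmp Fo Fm Go Gm eta" "X \<in> Obj"
  shows "eta X \<in> Hom (Fo X) (Go X)"
  using assms unfolding nat_trans_def by blast

lemma nat_trans_naturality:
  assumes "nat_trans Obj Hom cmp Fo Fm Go Gm eta" "X \<in> Obj" "Y \<in> Obj" "f \<in> Hom X Y"
  shows "cmp (Gm f) (eta X) = cmp (eta Y) (Fm f)"
  using assms unfolding nat_trans_def by blast

lemma nat_trans_to_id_comp:
  assumes "category Obj Hom cmp idm" "endofunctor Obj Hom cmp idm Fo Fm"
    and "nat_trans Obj Hom cmp Fo Fm id id q"
    and "X \<in> Obj" "Y \<in> Obj" "Z \<in> Obj" "f \<in> Hom X Y" "h \<in> Hom Z (Fo X)"
  shows "cmp (q Y) (cmp (Fm f) h) = cmp f (cmp (q X) h)"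
proof -
  have FX: "Fo X \<in> Obj" and FY: "Fo Y \<in> Obj"
    using assms(2,4,5) by (auto intro: endofunctor_obj)
  have qX: "q X \<in> Hom (Fo X) X" and qY: "q Y \<in> Hom (Fo Y) Y"
    using nat_trans_hom[OF assms(3)] assms(4,5) by auto
  have Ff: "Fm f \<in> Hom (Fo X) (Fo Y)"
    using endofunctor_hom[OF assms(2,4,5,7)] .
  have "cmp (q Y) (cmp (Fm f) h) = cmp (cmp (q Y) (Fm f)) h"
    using category_assoc[OF assms(1,6) FX FY assms(5,8) Ff qY] .
  also have "\<dots> = cmp (cmp f (q X)) h"
    using nat_trans_naturality[OF assms(3,4,5,7)] by simp
  also have "\<dots> = cmp f (cmp (q X) h)"
    using category_assoc[OF assms(1,6) FX assms(4,5,8) qX assms(7)] by simp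
  finally show ?thesis .
qed

lemma pre_summability_eq_iff:
  assumes "pre_summability Obj Hom cmp idm zero So Sm p0 p1 sig"
    and "Z \<in> Obj" "X \<in> Obj" "f \<in> Hom Z (So X)" "g \<in> Hom Z (So X)"
  shows "f = g \<longleftrightarrow> cmp (p0 X) f = cmp (p0 X) g \<and> cmp (p1 X) f = cmp (p1 X) g"
  using assms unfolding pre_summability_def by blast

lemma S_counit_comp_eq_counit_iff:
  assumes pre: "pre_summability Obj Hom cmp idm zero So Sm p0 p1 sig"
    and B: "endofunctor Obj Hom cmp idm Bo Bm"
    and eps: "nat_trans Obj Hom cmp Bo Bm id id eps"
    and X: "X \<in> Obj"
    and d: "d \<in> Hom (Bo (So X)) (So (Bo X))"
    and d0: "cmp (p0 (Bo X)) d = Bm (p0 X)"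
  shows "cmp (Sm (eps X)) d = eps (So X) \<longleftrightarrow>
         cmp (eps X) (cmp (p1 (Bo X)) d) = cmp (eps X) (Bm (p1 X))"
proof -
  have cat: "category Obj Hom cmp idm" and S: "endofunctor Obj Hom cmp idm So Sm"
    and p0: "nat_trans Obj Hom cmp So Sm id id p0"
    and p1: "nat_trans Obj Hom cmp So Sm id id p1"
    using pre unfolding pre_summability_def by auto
  have BX: "Bo X \<in> Obj" and SX: "So X \<in> Obj" and BSX: "Bo (So X) \<in> Obj" and SBX: "So (Bo X) \<in> Obj"
    using X B S by (auto intro: endofunctor_obj)
  have epsX: "eps X \<in> Hom (Bo X) X" and epsSX: "eps (So X) \<in> Hom (Bo (So X)) (So X)"
    using nat_trans_hom[OF eps] X SX by auto
  have lhs: "cmp (Sm (eps X)) d \<in> Hom (Bo (So X)) (So X)"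
    using cat BSX SBX SX d endofunctor_hom[OF S BX X epsX] by (rule category_comp_closed)
  have proj_lhs: "cmp (q X) (cmp (Sm (eps X)) d) = cmp (eps X) (cmp (q (Bo X)) d)"
    if "nat_trans Obj Hom cmp So Sm id id q" for q
    using nat_trans_to_id_comp[OF cat S that BX X BSX epsX d] .
  have proj_rhs: "cmp (q X) (eps (So X)) = cmp (eps X) (Bm (q X))"
    if "nat_trans Obj Hom cmp So Sm id id q" for q
  proof -
    have "q X \<in> Hom (So X) X"
      using nat_trans_hom[OF that X] by simp
    then show ?thesis
      using nat_trans_naturality[OF eps SX X] by simp
  qed
  show ?thesis
    using pre_summability_eq_iff[OF pre BSX X lhs epsSX]
    by (simp add: proj_lhs[OF p0] proj_lhs[OF p1] proj_rhs[OF p0] proj_rhs[OF p1] d0)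
qed

theorem mainTheorem4:
  fixes Obj :: "'o set" and Hom :: "'o \<Rightarrow> 'o \<Rightarrow> 'm set" and cmp :: "'m \<Rightarrow> 'm \<Rightarrow> 'm"
    and idm :: "'o \<Rightarrow> 'm"
    and Bo :: "'o \<Rightarrow> 'o" and Bm :: "'m \<Rightarrow> 'm" and der dig :: "'o \<Rightarrow> 'm"
    and zero :: "'o \<Rightarrow> 'o \<Rightarrow> 'm" and So :: "'o \<Rightarrow> 'o" and Sm :: "'m \<Rightarrow> 'm"
    and p0 p1 sig :: "'o \<Rightarrow> 'm" and dd :: "'o \<Rightarrow> 'm"
  assumes "comonad Obj Hom cmp idm Bo Bm der dig"
    and "summability Obj Hom cmp idm zero So Sm p0 p1 sig"
    and "nat_trans Obj Hom cmp (Bo \<circ> So) (Bm \<circ> Sm) (So \<circ> Bo) (Sm \<circ> Bm) dd"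
    and "\<forall>X\<in>Obj. cmp (p0 (Bo X)) (dd X) = Bm (p0 X)"
  shows "(\<forall>X\<in>Obj. cmp (Sm (der X)) (dd X) = der (So X)) \<longleftrightarrow>
         (\<forall>X\<in>Obj. cmp (der X) (cmp (p1 (Bo X)) (dd X)) = cmp (der X) (Bm (p1 X)))"
proof -
  have B: "endofunctor Obj Hom cmp idm Bo Bm" and der: "nat_trans Obj Hom cmp Bo Bm id id der"
    using assms(1) unfolding comonad_def by auto
  have pre: "pre_summability Obj Hom cmp idm zero So Sm p0 p1 sig"
    using assms(2) unfolding summability_def by blast
  have "cmp (Sm (der X)) (dd X) = der (So X) \<longleftrightarrow>
        cmp (der X) (cmp (p1 (Bo X)) (dd X)) = cmp (der X) (Bm (p1 X))" if "X \<in> Obj" for X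
    using S_counit_comp_eq_counit_iff[OF pre B der that] nat_trans_hom[OF assms(3) that] assms(4) that
    by simp
  then show ?thesis by blast
qed

end
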